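(* Let $N\ge 2$ and let $A=J-I$ be the adjacency matrix of the complete graph $K_N$ ($J$ the all-ones matrix). For integers $k\ge1$, $m\ge1$ define $$\mathcal A[k,m]=\sum_{\substack{j_1+\cdots+j_k=m\\ j_i\ge1}}\ \prod_{i=1}^k (A^{j_i})_{11}.$$ Then $\mathcal A[k,m]=0$ whenever $k>m/2$, and for $1\le k\le m/2$, $$\mathcal A[k,m]=(-1)^m(N-1)^k\sum_{r=0}^{m-2k}\binom{k+r-1}{r}\binom{m-k-r-1}{m-2k-r}(-1)^r(N-1)^r.$$ Moreover $\mathcal A[1,m]=\sum_{j=1}^{m-1}(-1)^{m-1-j}(N-1)^j$.
   Context: $(A^{j})_{11}$ is the number of closed walks of length $j$ starting and ending at node $1$. *)

theory Defs
  imports Main "Jordan_Normal_Form.Matrix"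
begin

text \<open>Adjacency matrix A = J - I of the complete graph on N vertices (vertices 0..N-1;
  the paper's node 1 is index 0).\<close>
definition complete_adj :: "nat \<Rightarrow> int mat" where
  "complete_adj N = mat N N (\<lambda>_. 1) - 1\<^sub>m N"

definition compositions :: "nat \<Rightarrow> nat \<Rightarrow> nat list set" where
  "compositions k m = {js. length js = k \<and> (\<forall>j\<in>set js. 1 \<le> j) \<and> sum_list js = m}"

definition calA :: "nat \<Rightarrow> nat \<Rightarrow> nat \<Rightarrow> int" where
  "calA N k m = (\<Sum>js\<in>compositions k m.
      prod_list (map (\<lambda>j. (complete_adj N ^\<^sub>m j) $$ (0, 0)) js))"

end

theory Submission
  imports Defs "HOL-Computational_Algebra.Formal_Power_Series"
begin

(* Write q = N - 1. Since K_N is q-regular, every row of A^j sums to q^j, so the closed-walk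
   counts a_j = (A^j)_00 satisfy a_(j+1) = q^j - a_j and a_0 = 1. Hence F = sum_(j>=1) a_j X^j
   satisfies (1 + X) (1 - q X) F = q X^2. The sum over compositions defining calA N k m is the
   coefficient of X^m in F^k = q^k X^(2k) (1 - q X)^(-k) (1 + X)^(-k), and multiplying out the
   two negative binomial series gives the formula. *)

lemma row_sum_pow_mat:
  fixes A :: "'a :: comm_semiring_1 mat"
  assumes A: "A \<in> carrier_mat n n"
    and row_sum: "\<And>i. i < n \<Longrightarrow> (\<Sum>l<n. A $$ (i, l)) = q"
    and i: "i < n"
  shows "(\<Sum>l<n. (A ^\<^sub>m j) $$ (i, l)) = q ^ j"
proof (induction j)
  case 0
  show ?case using A i by simp
next
  case (Suc j)
  have "(\<Sum>l<n. (A ^\<^sub>m Suc j) $$ (i, l)) = (\<Sum>l<n. \<Sum>t<n. (A ^\<^sub>m j) $$ (i, t) * A $$ (t, l))"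
    using A i by (simp add: scalar_prod_def atLeast0LessThan)
  also have "\<dots> = (\<Sum>t<n. (A ^\<^sub>m j) $$ (i, t) * (\<Sum>l<n. A $$ (t, l)))"
    by (subst sum.swap) (simp add: sum_distrib_left)
  also have "\<dots> = (\<Sum>t<n. (A ^\<^sub>m j) $$ (i, t)) * q"
    by (simp add: row_sum sum_distrib_right)
  finally show ?case by (simp add: Suc.IH mult.commute)
qed

lemma complete_adj_carrier: "complete_adj N \<in> carrier_mat N N"
  by (rule carrier_matI) (simp_all add: complete_adj_def)

lemma complete_adj_nth: "i < N \<Longrightarrow> l < N \<Longrightarrow> complete_adj N $$ (i, l) = (if i = l then 0 else 1)"
  by (simp add: complete_adj_def)

lemma complete_adj_row_sum: "i < N \<Longrightarrow> (\<Sum>l<N. complete_adj N $$ (i, l)) = int N - 1"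
  by (simp add: complete_adj_nth sum.If_cases of_nat_diff flip: Diff_eq)

definition closed_walks :: "nat \<Rightarrow> nat \<Rightarrow> int" where
  "closed_walks N j = (complete_adj N ^\<^sub>m j) $$ (0, 0)"

lemma closed_walks_0: "N \<ge> 1 \<Longrightarrow> closed_walks N 0 = 1"
  by (simp add: closed_walks_def complete_adj_def)

lemma closed_walks_Suc:
  assumes "N \<ge> 1"
  shows "closed_walks N (Suc j) = (int N - 1) ^ j - closed_walks N j"
proof -
  have "closed_walks N (Suc j) = (\<Sum>t<N. (complete_adj N ^\<^sub>m j) $$ (0, t) * (if t = 0 then 0 else 1))"
    using assms
    by (simp add: closed_walks_def scalar_prod_def carrier_matD[OF complete_adj_carrier]
        complete_adj_nth atLeast0LessThan)
  also have "\<dots> = (\<Sum>t<N. (complete_adj N ^\<^sub>m j) $$ (0, t)) - closed_walks N j"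
    using assms by (simp add: closed_walks_def sum.remove[of "{..<N}" 0])
  finally show ?thesis
    using assms by (simp add: row_sum_pow_mat[OF complete_adj_carrier complete_adj_row_sum])
qed

lemma closed_walks_Suc_eq_sum:
  assumes "N \<ge> 1"
  shows "closed_walks N (Suc m) = (\<Sum>j = 1..m. (-1) ^ (m - j) * (int N - 1) ^ j)"
proof (induction m)
  case 0
  show ?case using assms by (simp add: closed_walks_Suc closed_walks_0)
next
  case (Suc m)
  have "(\<Sum>j = 1..Suc m. (-1) ^ (Suc m - j) * (int N - 1) ^ j)
      = (int N - 1) ^ Suc m - (\<Sum>j = 1..m. (-1) ^ (m - j) * (int N - 1) ^ j)"
    by (auto simp: Suc_diff_le sum_negf[symmetric] intro!: sum.cong)
  then show ?case using assms by (simp add: closed_walks_Suc Suc.IH)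
qed

lemma compositions_finite: "finite (compositions k m)"
proof (rule finite_subset)
  show "compositions k m \<subseteq> {xs. set xs \<subseteq> {0..m} \<and> length xs = k}"
    by (auto simp: compositions_def intro: member_le_sum_list)
  show "finite {xs. set xs \<subseteq> {0..m} \<and> length xs = k}"
    by (rule finite_lists_length_eq) simp
qed

lemma compositions_0: "compositions 0 m = (if m = 0 then {[]} else {})"
  by (auto simp: compositions_def)

lemma compositions_Suc:
  "compositions (Suc k) m = (\<lambda>(j, js). j # js) ` (SIGMA j:{1..m}. compositions k (m - j))"
proof
  show "compositions (Suc k) m \<subseteq> (\<lambda>(j, js). j # js) ` (SIGMA j:{1..m}. compositions k (m - j))"
  proof
    fix xs assume xs: "xs \<in> compositions (Suc k) m"
    then obtain j js where xs_eq: "xs = j # js" by (cases xs) (auto simp: compositions_def)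
    with xs have "j \<in> {1..m}" "js \<in> compositions k (m - j)"
      by (auto simp: compositions_def)
    then show "xs \<in> (\<lambda>(j, js). j # js) ` (SIGMA j:{1..m}. compositions k (m - j))"
      using xs_eq by force
  qed
  show "(\<lambda>(j, js). j # js) ` (SIGMA j:{1..m}. compositions k (m - j)) \<subseteq> compositions (Suc k) m"
    by (auto simp: compositions_def)
qed

lemma sum_compositions_eq_fps_power_nth:
  fixes g :: "nat \<Rightarrow> 'a :: comm_semiring_1"
  shows "(\<Sum>js\<in>compositions k m. prod_list (map g js))
    = fps_nth (Abs_fps (\<lambda>j. if j = 0 then 0 else g j) ^ k) m"
proof (induction k arbitrary: m)
  case 0
  then show ?case by (simp add: compositions_0)
next
  case (Suc k)
  let ?F = "Abs_fps (\<lambda>j. if j = 0 then 0 else g j)"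
  have inj: "inj_on (\<lambda>(j, js). j # js) (SIGMA j:{1..m}. compositions k (m - j))"
    by (auto simp: inj_on_def)
  have "(\<Sum>js\<in>compositions (Suc k) m. prod_list (map g js))
      = (\<Sum>(j, js)\<in>(SIGMA j:{1..m}. compositions k (m - j)). g j * prod_list (map g js))"
    unfolding compositions_Suc by (subst sum.reindex[OF inj]) (simp add: case_prod_unfold)
  also have "\<dots> = (\<Sum>j = 1..m. g j * fps_nth (?F ^ k) (m - j))"
    by (subst sum.Sigma[symmetric]) (simp_all add: compositions_finite Suc.IH flip: sum_distrib_left)
  also have "\<dots> = (\<Sum>j = 0..m. fps_nth ?F j * fps_nth (?F ^ k) (m - j))"
    by (rule sum.mono_neutral_cong_left) auto
  also have "\<dots> = fps_nth (?F ^ Suc k) m"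
    by (simp add: fps_mult_nth)
  finally show ?case .
qed

definition neg_binomial_fps :: "'a :: comm_ring_1 \<Rightarrow> nat \<Rightarrow> 'a fps" where
  "neg_binomial_fps c k = Abs_fps (\<lambda>r. of_nat ((k + r - 1) choose r) * c ^ r)"

lemma neg_binomial_fps_0: "neg_binomial_fps c 0 = 1"
  by (rule fps_ext) (simp add: neg_binomial_fps_def binomial_eq_0)

lemma one_minus_X_mult_neg_binomial_fps_Suc:
  "(1 - fps_const c * fps_X) * neg_binomial_fps c (Suc k) = neg_binomial_fps c k"
proof (rule fps_ext)
  fix n
  show "fps_nth ((1 - fps_const c * fps_X) * neg_binomial_fps c (Suc k)) n
      = fps_nth (neg_binomial_fps c k) n"
    by (cases n) (simp_all add: neg_binomial_fps_def left_diff_distrib mult.assoc algebra_simps)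
qed

lemma one_minus_X_power_mult_neg_binomial_fps:
  "(1 - fps_const c * fps_X) ^ k * neg_binomial_fps c k = 1"
proof (induction k)
  case 0
  then show ?case by (simp add: neg_binomial_fps_0)
next
  case (Suc k)
  have "(1 - fps_const c * fps_X) ^ Suc k * neg_binomial_fps c (Suc k)
     = (1 - fps_const c * fps_X) ^ k * ((1 - fps_const c * fps_X) * neg_binomial_fps c (Suc k))"
    by (simp add: mult_ac)
  then show ?case by (simp add: one_minus_X_mult_neg_binomial_fps_Suc Suc.IH)
qed

definition walk_gf :: "nat \<Rightarrow> int fps" where
  "walk_gf N = Abs_fps (\<lambda>j. if j = 0 then 0 else closed_walks N j)"

lemma calA_eq_walk_gf_power_nth: "calA N k m = fps_nth (walk_gf N ^ k) m"
  unfolding calA_def walk_gf_def closed_walks_def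
  by (rule sum_compositions_eq_fps_power_nth)

lemma one_plus_X_mult_walk_gf:
  assumes "N \<ge> 1"
  shows "(1 + fps_X) * walk_gf N
    = fps_const (int N - 1) * fps_X ^ 2 * neg_binomial_fps (int N - 1) 1"
proof (rule fps_ext)
  fix n
  consider "n = 0" | "n = 1" | j where "n = Suc (Suc j)"
    by (metis One_nat_def not0_implies_Suc)
  then show "fps_nth ((1 + fps_X) * walk_gf N) n
    = fps_nth (fps_const (int N - 1) * fps_X ^ 2 * neg_binomial_fps (int N - 1) 1) n"
    using assms
    by cases (simp_all add: walk_gf_def neg_binomial_fps_def distrib_right mult.assoc
        fps_X_power_mult_nth closed_walks_Suc closed_walks_0)
qed

lemma walk_gf_power:
  assumes "N \<ge> 1"
  shows "walk_gf N ^ k = fps_const ((int N - 1) ^ k) * fps_X ^ (2 * k)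
    * (neg_binomial_fps (int N - 1) k * neg_binomial_fps (-1) k)"
proof -
  let ?q = "int N - 1"
  let ?P = "(1 + fps_X) * (1 - fps_const ?q * fps_X)"
  let ?Q = "neg_binomial_fps ?q k * neg_binomial_fps (-1) k"
  have "?P * walk_gf N = (1 - fps_const ?q * fps_X) * ((1 + fps_X) * walk_gf N)"
    by (simp add: mult_ac)
  also have "\<dots> = fps_const ?q * fps_X ^ 2
      * ((1 - fps_const ?q * fps_X) ^ 1 * neg_binomial_fps ?q 1)"
    unfolding one_plus_X_mult_walk_gf[OF assms] by (simp add: mult_ac)
  finally have P_walk_gf: "?P * walk_gf N = fps_const ?q * fps_X ^ 2"
    by (simp only: one_minus_X_power_mult_neg_binomial_fps mult_1_right)
  have "?P ^ k * ?Q = ((1 - fps_const (-1) * fps_X) ^ k * neg_binomial_fps (-1) k)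
      * ((1 - fps_const ?q * fps_X) ^ k * neg_binomial_fps ?q k)"
    by (simp add: power_mult_distrib mult_ac flip: fps_const_neg)
  then have P_Q: "?P ^ k * ?Q = 1"
    by (simp only: one_minus_X_power_mult_neg_binomial_fps mult_1)
  have "walk_gf N ^ k = walk_gf N ^ k * (?P ^ k * ?Q)"
    by (simp only: P_Q mult_1_right)
  also have "\<dots> = (?P * walk_gf N) ^ k * ?Q"
    by (simp only: power_mult_distrib mult_ac)
  also have "\<dots> = fps_const (?q ^ k) * fps_X ^ (2 * k) * ?Q"
    by (simp add: P_walk_gf power_mult_distrib power_mult fps_const_power)
  finally show ?thesis .
qed

lemma neg_binomial_fps_mult_neg_one_nth:
  "fps_nth (neg_binomial_fps c k * neg_binomial_fps (-1) k) n
    = (-1) ^ n * (\<Sum>r = 0..n. of_nat ((k + r - 1) choose r) * of_nat ((k + n - r - 1) choose (n - r))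
        * (-1) ^ r * c ^ r)"
  unfolding fps_mult_nth neg_binomial_fps_def fps_nth_Abs_fps sum_distrib_left
proof (rule sum.cong)
  fix r assume "r \<in> {0..n}"
  then have "r \<le> n" "k + (n - r) - 1 = k + n - r - 1" by auto
  moreover from \<open>r \<le> n\<close> have "(-1 :: 'a) ^ (n - r) = (-1) ^ n * (-1) ^ r"
    by (simp flip: neg_one_power_add_eq_neg_one_power_diff power_add)
  ultimately show "of_nat ((k + r - 1) choose r) * c ^ r
      * (of_nat ((k + (n - r) - 1) choose (n - r)) * (-1) ^ (n - r))
    = (-1) ^ n * (of_nat ((k + r - 1) choose r) * of_nat ((k + n - r - 1) choose (n - r))
      * (-1) ^ r * c ^ r)"
    by (simp add: mult_ac)
qed simp

lemma calA_eq_neg_binomial_nth: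
  assumes "N \<ge> 1"
  shows "calA N k m = (int N - 1) ^ k * (if m < 2 * k then 0
    else fps_nth (neg_binomial_fps (int N - 1) k * neg_binomial_fps (-1) k) (m - 2 * k))"
  unfolding calA_eq_walk_gf_power_nth walk_gf_power[OF assms]
  by (simp add: fps_X_power_mult_nth mult.assoc)

theorem mainTheorem2:
  fixes N :: nat
  assumes "N \<ge> 2"
  shows "(\<forall>k m. 1 \<le> k \<longrightarrow> 1 \<le> m \<longrightarrow> 2 * k > m \<longrightarrow> calA N k m = 0)
    \<and> (\<forall>k m. 1 \<le> k \<longrightarrow> 1 \<le> m \<longrightarrow> 2 * k \<le> m \<longrightarrow>
          calA N k m = (-1) ^ m * (int N - 1) ^ k *
            (\<Sum>r = 0..m - 2 * k. int ((k + r - 1) choose r) * int ((m - k - r - 1) choose (m - 2 * k - r))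
               * (-1) ^ r * (int N - 1) ^ r))
    \<and> (\<forall>m. 1 \<le> m \<longrightarrow>
          calA N 1 m = (\<Sum>j = 1..m - 1. (-1) ^ (m - 1 - j) * (int N - 1) ^ j))"
proof -
  from assms have N: "N \<ge> 1" by simp
  show ?thesis
  proof (intro conjI allI impI)
    fix k m :: nat
    assume "2 * k > m"
    then show "calA N k m = 0" by (simp add: calA_eq_neg_binomial_nth[OF N])
  next
    fix k m :: nat
    assume "2 * k \<le> m"
    then have "k + (m - 2 * k) - r - 1 = m - k - r - 1" for r by simp
    moreover have "(-1 :: int) ^ (m - 2 * k) = (-1) ^ m"
      using neg_one_power_add_eq_neg_one_power_diff[OF \<open>2 * k \<le> m\<close>, symmetric]
      by (simp add: power_add)
    ultimately show "calA N k m = (-1) ^ m * (int N - 1) ^ k *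
        (\<Sum>r = 0..m - 2 * k. int ((k + r - 1) choose r) * int ((m - k - r - 1) choose (m - 2 * k - r))
           * (-1) ^ r * (int N - 1) ^ r)"
      using \<open>2 * k \<le> m\<close>
      by (simp add: calA_eq_neg_binomial_nth[OF N] neg_binomial_fps_mult_neg_one_nth)
  next
    fix m :: nat
    assume "1 \<le> m"
    then obtain m' where "m = Suc m'" by (cases m) auto
    then show "calA N 1 m = (\<Sum>j = 1..m - 1. (-1) ^ (m - 1 - j) * (int N - 1) ^ j)"
      by (simp add: calA_eq_walk_gf_power_nth walk_gf_def closed_walks_Suc_eq_sum[OF N])
  qed
qed

end
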